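(* Let $\kappa,\mu,\nu>0$ and $0<\gamma<\frac1{\kappa+4}$. Let $(a,b)\in\mathbb R^2\setminus\{0\}$ satisfy $|b|\ge\mu$ or $|a|^\kappa|b|\ge\nu$, and set, for $x\ge1$, $$f(x)=\big(bx^{\frac34+\gamma}-ax^{-\frac14}\big)^2\big(x^{\frac14-\frac1{\kappa+4}}\big)^2+\big(bx^{\frac14}\big)^2\big(x^{\frac14-\frac1{\kappa+4}}\big)^2.$$ Then for every $\rho$ with $0<\rho\le f(1)$ there exist $C,\epsilon_0>0$, depending only on $\rho,\kappa,\mu,\nu,\gamma$, such that $f$ is $(C,\tfrac12;\rho,\epsilon_0)$-good on $[1,\infty)$.
   Context: A function $f$ on $[1,\infty)$ is $(C,\alpha;\rho,\epsilon_0)$-good if for every $0<\epsilon<\epsilon_0$ and every interval $I=(x_1,x_2)\subset[1,\infty)$ with $|f(x_1)|=\rho$, one has $m(\{x\in I:|f(x)|\le\epsilon\})\le C(\epsilon/\rho)^\alpha m(I)$, where $m$ is Lebesgue measure. *)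

theory Defs
  imports "HOL-Analysis.Analysis"
begin

definition good :: "(real \<Rightarrow> real) \<Rightarrow> real \<Rightarrow> real \<Rightarrow> real \<Rightarrow> real \<Rightarrow> bool" where
  "good f C \<alpha> \<rho> \<epsilon>0 \<longleftrightarrow>
     (\<forall>\<epsilon> x1 x2. 0 < \<epsilon> \<and> \<epsilon> < \<epsilon>0 \<and> 1 \<le> x1 \<and> x1 < x2 \<and> \<bar>f x1\<bar> = \<rho> \<longrightarrow>
        measure lebesgue {x \<in> {x1<..<x2}. \<bar>f x\<bar> \<le> \<epsilon>}
          \<le> C * (\<epsilon> / \<rho>) powr \<alpha> * measure lebesgue {x1<..<x2})"

definition fab :: "real \<Rightarrow> real \<Rightarrow> real \<Rightarrow> real \<Rightarrow> real \<Rightarrow> real" where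
  "fab \<kappa> \<gamma> a b x =
     (b * x powr (3/4 + \<gamma>) - a * x powr (-1/4))\<^sup>2 * (x powr (1/4 - 1/(\<kappa>+4)))\<^sup>2
     + (b * x powr (1/4))\<^sup>2 * (x powr (1/4 - 1/(\<kappa>+4)))\<^sup>2"

end

theory Submission
  imports Defs
begin

text \<open>Put q = 1/(\<kappa>+4) and G(x) = b x^(1+\<gamma>) - a, so that
  f(x) = (x^(-q) G(x))^2 + (b x^(1/2-q))^2. On the sublevel set {f \<le> e^2} one has |b| \<le> e and
  |G(x)| \<le> e x^q. If |b| \<ge> \<mu> the sublevel set is therefore empty for small e. Otherwise
  |a|^\<kappa> |b| \<ge> \<nu> forces |a| \<ge> 2 e x^q, so |b| x^(1+\<gamma>) is comparable to |a| and any two points of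
  the sublevel set are within a factor 3 of each other; the normalisation |f(x1)| = \<rho> moreover
  keeps them below 2 x1. As |G(x1)| is of size sqrt \<rho> x1^q while |G| \<le> e x^q on the sublevel set,
  and G changes at rate about |b| x^\<gamma>, the sublevel set in (x1,x2) has diameter
  O(e/sqrt \<rho> (x2 - x1)), i.e. measure O((\<epsilon>/\<rho>)^(1/2) (x2 - x1)).\<close>

lemma powr_one_plus_diff_le:
  fixes s t g :: real
  assumes "0 < s" "s \<le> t" "g \<le> 1"
  shows "t powr (1+g) - s powr (1+g) \<le> 2 * t powr g * (t - s)"
proof -
  have t: "0 < t" using assms by linarith
  have "s\<^sup>2 = s powr (1+g) * s powr (1-g)"
    using assms by (simp add: powr_add[symmetric] power2_eq_square)
  also have "\<dots> \<le> s powr (1+g) * t powr (1-g)"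
    using assms by (intro mult_left_mono powr_mono2) auto
  finally have "s\<^sup>2 * t powr g \<le> s powr (1+g) * (t powr (1-g) * t powr g)"
    unfolding mult.assoc[symmetric] by (rule mult_right_mono) simp
  also have "t powr (1-g) * t powr g = t" using t by (simp add: powr_add[symmetric])
  finally have "s\<^sup>2 * t powr g \<le> s powr (1+g) * t" .
  moreover have "t powr (1+g) = t powr g * t" using t by (simp add: powr_add)
  ultimately have "(t powr (1+g) - s powr (1+g)) * t \<le> t powr g * (t - s) * (t + s)"
    by (simp add: algebra_simps power2_eq_square)
  also have "\<dots> \<le> t powr g * (t - s) * (2 * t)"
    using assms by (intro mult_left_mono) auto
  also have "\<dots> = (2 * t powr g * (t - s)) * t" by simp
  finally show ?thesis using t by simp
qed

lemma powr_one_plus_diff_ge: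
  fixes s t g :: real
  assumes "0 < s" "s \<le> t" "0 \<le> g"
  shows "s powr g * (t - s) \<le> t powr (1+g) - s powr (1+g)"
proof -
  have "t * s powr g \<le> t * t powr g" using assms by (intro mult_left_mono powr_mono2) auto
  moreover have "t powr (1+g) = t * t powr g" "s powr (1+g) = s * s powr g"
    using assms by (simp_all add: powr_add)
  ultimately show ?thesis by (simp add: algebra_simps)
qed

lemma powr_one_plus_dist_ge:
  fixes y z g :: real
  assumes "0 < y" "0 < z" "y \<le> 3 * z" "0 \<le> g" "g \<le> 1"
  shows "y powr g / 3 * \<bar>y - z\<bar> \<le> \<bar>y powr (1+g) - z powr (1+g)\<bar>"
proof (cases "y \<le> z")
  case True
  have "y powr g / 3 * \<bar>y - z\<bar> \<le> y powr g * (z - y)" using True by simp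
  also have "\<dots> \<le> z powr (1+g) - y powr (1+g)" using powr_one_plus_diff_ge assms True by blast
  finally show ?thesis by linarith
next
  case False
  have "y powr g / 3 \<le> y powr g / 3 powr g"
    using assms powr_mono[of g 1 3] by (intro divide_left_mono) auto
  also have "\<dots> = (y / 3) powr g" using assms by (simp add: powr_divide)
  also have "\<dots> \<le> z powr g" using assms by (intro powr_mono2) auto
  finally have "y powr g / 3 * \<bar>y - z\<bar> \<le> z powr g * (y - z)"
    using False by (intro mult_mono) auto
  also have "\<dots> \<le> y powr (1+g) - z powr (1+g)" using powr_one_plus_diff_ge assms False by simp
  finally show ?thesis by linarith
qed

lemma powr_le_mult_powr_imp_le:
  fixes u v c p :: real
  assumes "0 < u" "0 < v" "1 \<le> c" "1 \<le> p" "u powr p \<le> c * v powr p"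
  shows "u \<le> c * v"
proof (rule ccontr)
  assume "\<not> u \<le> c * v"
  then have "(c * v) powr p < u powr p" using assms by (intro powr_less_mono2) auto
  moreover have "c * v powr p \<le> c powr p * v powr p"
    using assms by (intro mult_right_mono) (auto simp: ge_one_powr_ge_zero powr_mono[of 1 p c, simplified])
  ultimately show False using assms by (simp add: powr_mult)
qed

lemma measure_le_of_spread_le:
  fixes S :: "real set"
  assumes "S \<subseteq> {x1<..<x2}" "x1 < x2" "0 \<le> K"
    and spread: "\<And>y z. y \<in> S \<Longrightarrow> z \<in> S \<Longrightarrow> \<bar>y - z\<bar> \<le> K * (y - x1)"
  shows "measure lebesgue S \<le> 2 * K * (x2 - x1)"
proof (cases "S = {}")
  case True
  then show ?thesis using assms by simp
next
  case False
  then obtain y where y: "y \<in> S" by auto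
  have "x1 < y" "y < x2" using y assms(1) by auto
  have sub: "S \<subseteq> {y - K * (y - x1) .. y + K * (y - x1)}"
    using spread[OF y] by (fastforce simp: abs_le_iff)
  have "measure lebesgue S \<le> measure lebesgue {y - K * (y - x1) .. y + K * (y - x1)}"
  proof (cases "S \<in> sets lebesgue")
    case True
    then show ?thesis by (intro measure_mono_fmeasurable[OF sub]) auto
  next
    case False
    then show ?thesis by (simp add: measure_notin_sets)
  qed
  also have "\<dots> = 2 * K * (y - x1)" using \<open>x1 < y\<close> assms by simp
  also have "\<dots> \<le> 2 * K * (x2 - x1)" using \<open>y < x2\<close> assms by (intro mult_left_mono) auto
  finally show ?thesis .
qed

lemma fab_eq:
  fixes \<kappa> \<gamma> a b x :: real
  assumes "0 < x"
  defines "q \<equiv> 1 / (\<kappa>+4)"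
  shows "fab \<kappa> \<gamma> a b x = (x powr (-q) * (b * x powr (1+\<gamma>) - a))\<^sup>2 + (b * x powr (1/2 - q))\<^sup>2"
proof -
  have outer: "(b * x powr (3/4 + \<gamma>) - a * x powr (-1/4)) * x powr (1/4 - 1/(\<kappa>+4))
      = x powr (-q) * (b * x powr (1+\<gamma>) - a)"
   and inner: "b * x powr (1/4) * x powr (1/4 - 1/(\<kappa>+4)) = b * x powr (1/2 - q)"
    using assms by (simp_all add: algebra_simps powr_add[symmetric])
  show ?thesis unfolding fab_def power_mult_distrib[symmetric] outer inner ..
qed

lemma abs_powr_neg_mult:
  fixes x q u :: real
  assumes "0 < x"
  shows "\<bar>u\<bar> = x powr q * \<bar>x powr (-q) * u\<bar>"
  using assms by (simp add: abs_mult powr_minus)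

lemma fab_le_sq_bounds:
  fixes \<kappa> \<gamma> a b e x :: real
  assumes "0 < x" "fab \<kappa> \<gamma> a b x \<le> e\<^sup>2" "0 \<le> e"
  defines "q \<equiv> 1 / (\<kappa>+4)"
  shows "\<bar>b * x powr (1+\<gamma>) - a\<bar> \<le> e * x powr q" "\<bar>b\<bar> * x powr (1/2 - q) \<le> e"
proof -
  let ?u = "x powr (-q) * (b * x powr (1+\<gamma>) - a)" and ?v = "b * x powr (1/2 - q)"
  have sum: "?u\<^sup>2 + ?v\<^sup>2 \<le> e\<^sup>2" using assms fab_eq[of x \<kappa> \<gamma> a b] by simp
  then have "\<bar>?u\<bar> \<le> e"
    using \<open>0 \<le> e\<close> abs_le_square_iff[of ?u e] zero_le_power2[of ?v] by simp
  then have "x powr q * \<bar>?u\<bar> \<le> x powr q * e" by (simp add: mult_left_mono)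
  then show "\<bar>b * x powr (1+\<gamma>) - a\<bar> \<le> e * x powr q"
    using abs_powr_neg_mult[OF \<open>0 < x\<close>, of "b * x powr (1+\<gamma>) - a" q] by (simp add: mult.commute)
  show "\<bar>b\<bar> * x powr (1/2 - q) \<le> e"
    using sum \<open>0 \<le> e\<close> abs_le_square_iff[of ?v e] zero_le_power2[of ?u] by (simp add: abs_mult)
qed

lemma fab_eq_bounds:
  fixes \<kappa> \<gamma> a b \<rho> x :: real
  assumes "0 < x" "fab \<kappa> \<gamma> a b x = \<rho>"
  defines "q \<equiv> 1 / (\<kappa>+4)"
  assumes "\<bar>b\<bar> * x powr (1/2 - q) \<le> sqrt \<rho> / 8"
  shows "sqrt \<rho> / 2 * x powr q \<le> \<bar>b * x powr (1+\<gamma>) - a\<bar>"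
    and "\<bar>b * x powr (1+\<gamma>) - a\<bar> \<le> sqrt \<rho> * x powr q"
proof -
  let ?u = "x powr (-q) * (b * x powr (1+\<gamma>) - a)" and ?v = "b * x powr (1/2 - q)"
  have sum: "?u\<^sup>2 + ?v\<^sup>2 = \<rho>" using assms fab_eq[of x \<kappa> \<gamma> a b] by simp
  then have "0 \<le> \<rho>" by (metis add_nonneg_nonneg zero_le_power2)
  have "\<bar>?v\<bar>\<^sup>2 \<le> (sqrt \<rho> / 8)\<^sup>2" using assms(4) by (intro power_mono) (auto simp: abs_mult)
  then have "?v\<^sup>2 \<le> \<rho> / 64" using \<open>0 \<le> \<rho>\<close> by (simp add: power_divide)
  then have "\<rho> / 4 \<le> ?u\<^sup>2" "?u\<^sup>2 \<le> \<rho>" using sum zero_le_power2[of ?v] by linarith+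
  then have "sqrt (\<rho> / 4) \<le> \<bar>?u\<bar>" "\<bar>?u\<bar> \<le> sqrt \<rho>"
    by (metis real_sqrt_le_mono real_sqrt_abs)+
  then have "sqrt \<rho> / 2 \<le> \<bar>?u\<bar>" "\<bar>?u\<bar> \<le> sqrt \<rho>" by (simp_all add: real_sqrt_divide)
  then have "x powr q * (sqrt \<rho> / 2) \<le> x powr q * \<bar>?u\<bar>" "x powr q * \<bar>?u\<bar> \<le> x powr q * sqrt \<rho>"
    by (intro mult_left_mono; simp)+
  then show "sqrt \<rho> / 2 * x powr q \<le> \<bar>b * x powr (1+\<gamma>) - a\<bar>"
    and "\<bar>b * x powr (1+\<gamma>) - a\<bar> \<le> sqrt \<rho> * x powr q"
    using abs_powr_neg_mult[OF \<open>0 < x\<close>, of "b * x powr (1+\<gamma>) - a" q] by (simp_all add: mult.commute)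
qed

text \<open>Below this threshold for e no point y of the sublevel set lies beyond 2 x1: otherwise
  |a| \<le> 4R y^q, which with |a|^\<kappa> |b| \<ge> \<nu> bounds y^(1+\<gamma>-q(\<kappa>+1)) by 3/2 (4R)^(\<kappa>+1)/\<nu>,
  and then \<nu> \<le> |a|^\<kappa> |b| \<le> (4R)^\<kappa> y^(q\<kappa>) e fails.\<close>
definition doubling_threshold :: "real \<Rightarrow> real \<Rightarrow> real \<Rightarrow> real \<Rightarrow> real \<Rightarrow> real" where
  "doubling_threshold \<kappa> \<gamma> q \<nu> R =
     \<nu> / ((4 * R) powr \<kappa> * (3/2 * (4 * R) powr (\<kappa>+1) / \<nu>) powr (q * \<kappa> / (1 + \<gamma> - q * (\<kappa>+1))))"

lemma doubling_threshold_pos: "0 < \<nu> \<Longrightarrow> 0 < R \<Longrightarrow> 0 < doubling_threshold \<kappa> \<gamma> q \<nu> R"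
  by (simp add: doubling_threshold_def)

text \<open>Here e stands for \<epsilon>^(1/2); of a point x of the sublevel set {f \<le> \<epsilon>} the lemmas below only
  use |G x| \<le> e x^q.\<close>
locale sublevel_estimates =
  fixes \<kappa> \<gamma> q \<nu> a b e :: real
  assumes kappa_pos: "0 < \<kappa>"
    and gamma_pos: "0 < \<gamma>" and gamma_le_1: "\<gamma> \<le> 1"
    and q_pos: "0 < q" and q_le_1: "q \<le> 1"
    and q_kappa_less: "q * (\<kappa>+1) < 1 + \<gamma>"
    and e_pos: "0 < e"
    and product_ge: "\<nu> \<le> \<bar>a\<bar> powr \<kappa> * \<bar>b\<bar>"
    and e_small: "3 * 2 powr \<kappa> * e powr (\<kappa>+1) < \<nu>"
begin

abbreviation G :: "real \<Rightarrow> real" where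
  "G x \<equiv> b * x powr (1+\<gamma>) - a"

lemma nu_pos: "0 < \<nu>"
proof -
  have "0 < 3 * 2 powr \<kappa> * e powr (\<kappa>+1)" using e_pos by simp
  then show ?thesis using e_small by linarith
qed

lemma abs_a_pos: "0 < \<bar>a\<bar>" and abs_b_pos: "0 < \<bar>b\<bar>"
  using product_ge nu_pos by (cases "a = 0"; cases "b = 0"; simp)+

lemma abs_b_powr_le: "\<bar>b\<bar> * w powr (1+\<gamma>) \<le> \<bar>G w\<bar> + \<bar>a\<bar>"
proof -
  have "\<bar>b * w powr (1+\<gamma>)\<bar> \<le> \<bar>G w\<bar> + \<bar>a\<bar>" by linarith
  then show ?thesis by (simp add: abs_mult)
qed

lemma abs_a_ge:
  assumes "1 \<le> w" "\<bar>G w\<bar> \<le> e * w powr q"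
  shows "2 * e * w powr q \<le> \<bar>a\<bar>"
proof (rule ccontr)
  assume "\<not> ?thesis"
  then have a_less: "\<bar>a\<bar> < 2 * e * w powr q" by simp
  have w: "0 < w" using assms by simp
  have "\<bar>b\<bar> * w powr (1+\<gamma>) \<le> 3 * e * w powr q"
    using abs_b_powr_le[of w] assms a_less by linarith
  then have b_le: "\<bar>b\<bar> \<le> 3 * e * w powr q / w powr (1+\<gamma>)"
    using w by (simp add: field_simps)
  have "\<bar>a\<bar> powr \<kappa> \<le> (2 * e * w powr q) powr \<kappa>"
    using a_less kappa_pos by (intro powr_mono2) auto
  also have "\<dots> = 2 powr \<kappa> * e powr \<kappa> * w powr (q * \<kappa>)"
    using e_pos w by (simp add: powr_mult powr_powr)
  finally have "\<bar>a\<bar> powr \<kappa> * \<bar>b\<bar>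
      \<le> (2 powr \<kappa> * e powr \<kappa> * w powr (q * \<kappa>)) * (3 * e * w powr q / w powr (1+\<gamma>))"
    using b_le by (intro mult_mono) auto
  also have "\<dots> = 3 * 2 powr \<kappa> * (e powr \<kappa> * e) * (w powr (q * \<kappa>) * w powr q / w powr (1+\<gamma>))"
    by (simp add: field_simps)
  also have "e powr \<kappa> * e = e powr (\<kappa>+1)" using e_pos by (simp add: powr_add)
  also have "w powr (q * \<kappa>) * w powr q = w powr (q * (\<kappa>+1))"
    using w by (simp add: powr_add[symmetric] algebra_simps)
  also have "w powr (q * (\<kappa>+1)) / w powr (1+\<gamma>) \<le> 1"
    using assms q_kappa_less by (simp add: powr_mono)
  then have "3 * 2 powr \<kappa> * e powr (\<kappa>+1) * (w powr (q * (\<kappa>+1)) / w powr (1+\<gamma>))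
      \<le> 3 * 2 powr \<kappa> * e powr (\<kappa>+1)"
    by (intro mult_left_le) auto
  finally show False using e_small product_ge by linarith
qed

lemma abs_b_powr_between:
  assumes "1 \<le> w" "\<bar>G w\<bar> \<le> e * w powr q"
  shows "\<bar>a\<bar> / 2 \<le> \<bar>b\<bar> * w powr (1+\<gamma>)" "\<bar>b\<bar> * w powr (1+\<gamma>) \<le> 3 * \<bar>a\<bar> / 2"
proof -
  have "\<bar>a\<bar> \<le> \<bar>G w\<bar> + \<bar>b * w powr (1+\<gamma>)\<bar>" by linarith
  then have "\<bar>a\<bar> \<le> \<bar>G w\<bar> + \<bar>b\<bar> * w powr (1+\<gamma>)" by (simp add: abs_mult)
  then show "\<bar>a\<bar> / 2 \<le> \<bar>b\<bar> * w powr (1+\<gamma>)" "\<bar>b\<bar> * w powr (1+\<gamma>) \<le> 3 * \<bar>a\<bar> / 2"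
    using abs_a_ge[OF assms] assms(2) abs_b_powr_le[of w] by linarith+
qed

lemma sublevel_le_three_times:
  assumes "1 \<le> y" "1 \<le> z" "\<bar>G y\<bar> \<le> e * y powr q" "\<bar>G z\<bar> \<le> e * z powr q"
  shows "y \<le> 3 * z"
proof -
  have "\<bar>b\<bar> * y powr (1+\<gamma>) \<le> 3 * (\<bar>b\<bar> * z powr (1+\<gamma>))"
    using abs_b_powr_between[of y] abs_b_powr_between[of z] assms by linarith
  then have "\<bar>b\<bar> * y powr (1+\<gamma>) \<le> \<bar>b\<bar> * (3 * z powr (1+\<gamma>))" by simp
  then have "y powr (1+\<gamma>) \<le> 3 * z powr (1+\<gamma>)" using abs_b_pos by simp
  moreover have "0 < y" "0 < z" "1 \<le> 1 + \<gamma>" using assms gamma_pos by simp_all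
  ultimately show ?thesis using powr_le_mult_powr_imp_le[of y z 3 "1+\<gamma>"] by simp
qed

lemma abs_a_le_if_far_from_start:
  assumes "1 \<le> x1" "2 * x1 < y" "\<bar>G x1\<bar> \<le> R * x1 powr q" "\<bar>G y\<bar> \<le> e * y powr q"
  shows "\<bar>a\<bar> \<le> 4 * R * y powr q"
proof -
  have "x1 powr (1+\<gamma>) \<le> (y / 2) powr (1+\<gamma>)" using assms gamma_pos by (intro powr_mono2) auto
  also have "\<dots> = y powr (1+\<gamma>) / 2 powr (1+\<gamma>)" using assms by (simp add: powr_divide)
  also have "\<dots> \<le> y powr (1+\<gamma>) / 2"
    using gamma_pos powr_mono[of 1 "1+\<gamma>" 2] by (intro divide_left_mono) auto
  finally have "\<bar>b\<bar> * x1 powr (1+\<gamma>) \<le> \<bar>b\<bar> * (y powr (1+\<gamma>) / 2)" by (rule mult_left_mono) simp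
  moreover have "1 \<le> y" using assms by simp
  ultimately have "\<bar>b\<bar> * x1 powr (1+\<gamma>) \<le> 3 * \<bar>a\<bar> / 4"
    using abs_b_powr_between(2)[of y] assms(4) by linarith
  moreover have "\<bar>a\<bar> \<le> \<bar>G x1\<bar> + \<bar>b * x1 powr (1+\<gamma>)\<bar>" by linarith
  ultimately have "\<bar>a\<bar> \<le> 4 * (R * x1 powr q)" using assms(3) by (simp add: abs_mult)
  also have "\<dots> \<le> 4 * (R * y powr q)"
  proof -
    have "0 \<le> R * x1 powr q" using abs_ge_zero[of "G x1"] assms(3) by linarith
    then have "0 \<le> R" using assms(1) by (simp add: zero_le_mult_iff)
    then show ?thesis using assms q_pos by (intro mult_left_mono powr_mono2) auto
  qed
  finally show ?thesis by simp
qed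

lemma powr_gap_le_of_abs_a_le:
  assumes "1 \<le> y" "\<bar>G y\<bar> \<le> e * y powr q" "\<bar>a\<bar> \<le> c * y powr q"
  shows "y powr (1 + \<gamma> - q * (\<kappa>+1)) \<le> 3/2 * c powr (\<kappa>+1) / \<nu>"
proof -
  have y: "0 < y" using assms by simp
  have "0 < c * y powr q" using abs_a_pos assms(3) by linarith
  then have c: "0 < c" using y by (simp add: zero_less_mult_iff)
  have "\<nu> * y powr (1+\<gamma>) \<le> \<bar>a\<bar> powr \<kappa> * (\<bar>b\<bar> * y powr (1+\<gamma>))"
    using product_ge by (simp add: mult.assoc[symmetric] mult_right_mono)
  also have "\<dots> \<le> \<bar>a\<bar> powr \<kappa> * (3/2 * \<bar>a\<bar>)"
    using abs_b_powr_between(2)[OF assms(1,2)] by (intro mult_left_mono) auto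
  also have "\<dots> = 3/2 * \<bar>a\<bar> powr (\<kappa>+1)" using abs_a_pos by (simp add: powr_add)
  also have "\<dots> \<le> 3/2 * (c * y powr q) powr (\<kappa>+1)"
    using assms(3) kappa_pos by (intro mult_left_mono powr_mono2) auto
  also have "\<dots> = 3/2 * c powr (\<kappa>+1) * y powr (q * (\<kappa>+1))"
    using c y by (simp add: powr_mult powr_powr)
  finally have "\<nu> * (y powr (1+\<gamma>) / y powr (q * (\<kappa>+1))) \<le> 3/2 * c powr (\<kappa>+1)"
    using y by (simp add: field_simps)
  then show ?thesis using nu_pos y by (simp add: powr_diff field_simps)
qed

lemma le_twice_start:
  assumes "1 \<le> x1" "x1 < y" "0 < R" "\<bar>G x1\<bar> \<le> R * x1 powr q" "\<bar>G y\<bar> \<le> e * y powr q"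
    and "\<bar>b\<bar> \<le> e" "e < doubling_threshold \<kappa> \<gamma> q \<nu> R"
  shows "y \<le> 2 * x1"
proof (rule ccontr)
  assume "\<not> y \<le> 2 * x1"
  define D where "D = 1 + \<gamma> - q * (\<kappa>+1)"
  define Y where "Y = 3/2 * (4 * R) powr (\<kappa>+1) / \<nu>"
  have y: "1 \<le> y" using assms by simp
  have D: "0 < D" using q_kappa_less by (simp add: D_def)
  have a_le: "\<bar>a\<bar> \<le> 4 * R * y powr q"
    using abs_a_le_if_far_from_start assms \<open>\<not> y \<le> 2 * x1\<close> by simp
  have "y powr D \<le> Y" using powr_gap_le_of_abs_a_le[OF y assms(5) a_le] by (simp add: D_def Y_def)
  then have "y powr (q * \<kappa>) \<le> Y powr (q * \<kappa> / D)"
    using D y q_pos kappa_pos powr_mono2[of "q * \<kappa> / D" "y powr D" Y] by (simp add: powr_powr)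
  have "\<nu> \<le> \<bar>a\<bar> powr \<kappa> * \<bar>b\<bar>" by (rule product_ge)
  also have "\<dots> \<le> (4 * R * y powr q) powr \<kappa> * e"
    using a_le assms(6) kappa_pos by (intro mult_mono powr_mono2) auto
  also have "\<dots> = (4 * R) powr \<kappa> * y powr (q * \<kappa>) * e"
    using assms(3) y by (simp add: powr_mult powr_powr)
  also have "\<dots> \<le> (4 * R) powr \<kappa> * Y powr (q * \<kappa> / D) * e"
    using \<open>y powr (q * \<kappa>) \<le> Y powr (q * \<kappa> / D)\<close> e_pos by (intro mult_right_mono mult_left_mono) auto
  also have "\<dots> < \<nu>"
  proof -
    have "0 < Y" using assms(3) nu_pos by (simp add: Y_def)
    then have "0 < (4 * R) powr \<kappa> * Y powr (q * \<kappa> / D)" using assms(3) by simp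
    then show ?thesis
      using assms(7) by (simp add: doubling_threshold_def D_def Y_def pos_less_divide_eq mult.commute)
  qed
  finally show False by simp
qed

lemma dist_from_start_ge:
  assumes "1 \<le> x1" "x1 < y" "y \<le> 2 * x1" "R / 2 * x1 powr q \<le> \<bar>G x1\<bar>" "\<bar>G y\<bar> \<le> e * y powr q"
    and "e \<le> R / 8"
  shows "R * y powr q / 16 \<le> \<bar>b\<bar> * y powr \<gamma> * (y - x1)"
proof -
  have x1: "0 < x1" using assms by simp
  have "0 \<le> R" using assms(6) e_pos by simp
  have "y powr q \<le> (2 * x1) powr q" using assms q_pos by (intro powr_mono2) auto
  also have "\<dots> \<le> 2 * x1 powr q"
    using x1 q_le_1 powr_mono[of q 1 2] by (simp add: powr_mult mult_right_mono)
  finally have "R / 2 * (y powr q / 2) \<le> R / 2 * x1 powr q"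
    using \<open>0 \<le> R\<close> by (intro mult_left_mono) auto
  moreover have "e * y powr q \<le> R / 8 * y powr q" using assms(6) by (intro mult_right_mono) auto
  moreover have "\<bar>G x1\<bar> - \<bar>G y\<bar> \<le> \<bar>b\<bar> * (y powr (1+\<gamma>) - x1 powr (1+\<gamma>))"
  proof -
    have "\<bar>G x1\<bar> - \<bar>G y\<bar> \<le> \<bar>b * (y powr (1+\<gamma>) - x1 powr (1+\<gamma>))\<bar>"
      by (simp add: right_diff_distrib)
    also have "\<dots> = \<bar>b\<bar> * (y powr (1+\<gamma>) - x1 powr (1+\<gamma>))"
      using assms x1 gamma_pos by (simp add: abs_mult powr_mono2)
    finally show ?thesis .
  qed
  moreover have "\<bar>b\<bar> * (y powr (1+\<gamma>) - x1 powr (1+\<gamma>)) \<le> \<bar>b\<bar> * (2 * y powr \<gamma> * (y - x1))"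
    using powr_one_plus_diff_le[of x1 y \<gamma>] x1 assms gamma_le_1 by (intro mult_left_mono) auto
  ultimately show ?thesis using assms(4,5) by (simp add: algebra_simps)
qed

lemma dist_sublevel_le:
  assumes "1 \<le> y" "1 \<le> z" "\<bar>G y\<bar> \<le> e * y powr q" "\<bar>G z\<bar> \<le> e * z powr q"
  shows "\<bar>b\<bar> * y powr \<gamma> * \<bar>y - z\<bar> \<le> 12 * e * y powr q"
proof -
  have "\<bar>b\<bar> * \<bar>y powr (1+\<gamma>) - z powr (1+\<gamma>)\<bar> = \<bar>G y - G z\<bar>"
    by (simp add: right_diff_distrib flip: abs_mult)
  also have "\<dots> \<le> e * y powr q + e * z powr q" using assms(3,4) by linarith
  also have "e * z powr q \<le> e * (3 * y powr q)"
  proof -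
    have "z powr q \<le> (3 * y) powr q" using sublevel_le_three_times[of z y] assms q_pos by (intro powr_mono2) auto
    also have "\<dots> \<le> 3 * y powr q"
      using assms q_le_1 powr_mono[of q 1 3] by (simp add: powr_mult mult_right_mono)
    finally show ?thesis using e_pos by simp
  qed
  finally have "\<bar>b\<bar> * \<bar>y powr (1+\<gamma>) - z powr (1+\<gamma>)\<bar> \<le> 4 * e * y powr q" by simp
  moreover have "\<bar>b\<bar> * (y powr \<gamma> / 3 * \<bar>y - z\<bar>) \<le> \<bar>b\<bar> * \<bar>y powr (1+\<gamma>) - z powr (1+\<gamma>)\<bar>"
    using powr_one_plus_dist_ge[of y z \<gamma>] sublevel_le_three_times[of y z] assms gamma_pos gamma_le_1
    by (intro mult_left_mono) auto
  ultimately show ?thesis by simp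
qed

lemma sublevel_spread:
  assumes "1 \<le> x1" "x1 < y" "x1 < z" "0 < R"
    and "\<bar>G x1\<bar> \<le> R * x1 powr q" "R / 2 * x1 powr q \<le> \<bar>G x1\<bar>"
    and "\<bar>G y\<bar> \<le> e * y powr q" "\<bar>G z\<bar> \<le> e * z powr q" "\<bar>b\<bar> \<le> e"
    and "e \<le> R / 8" "e < doubling_threshold \<kappa> \<gamma> q \<nu> R"
  shows "\<bar>y - z\<bar> \<le> 192 * (e / R) * (y - x1)"
proof -
  define P where "P = \<bar>b\<bar> * y powr \<gamma>"
  have "0 < P" using abs_b_pos assms by (simp add: P_def)
  have "y \<le> 2 * x1" using le_twice_start[OF assms(1,2,4,5,7,9,11)] .
  then have start: "R * y powr q / 16 \<le> P * (y - x1)"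
    unfolding P_def using dist_from_start_ge[OF assms(1,2)] assms(6,7,10) by blast
  have "P * (R * \<bar>y - z\<bar>) = R * (P * \<bar>y - z\<bar>)" by simp
  also have "\<dots> \<le> R * (12 * e * y powr q)"
    unfolding P_def using dist_sublevel_le[of y z] assms by (intro mult_left_mono) auto
  also have "\<dots> = 192 * e * (R * y powr q / 16)" by simp
  also have "\<dots> \<le> 192 * e * (P * (y - x1))" using start e_pos by (intro mult_left_mono) auto
  finally have "P * (R * \<bar>y - z\<bar>) \<le> P * (192 * e * (y - x1))" by (simp add: ac_simps)
  then have "R * \<bar>y - z\<bar> \<le> 192 * e * (y - x1)" using \<open>0 < P\<close> by simp
  then show ?thesis using assms(4) by (simp add: field_simps)
qed

end

lemma fab_nonneg: "0 \<le> fab \<kappa> \<gamma> a b x"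
  by (simp add: fab_def)

lemma abs_b_le_of_fab_le:
  fixes \<kappa> \<gamma> a b e x :: real
  assumes "0 < \<kappa>" "1 \<le> x" "fab \<kappa> \<gamma> a b x \<le> e\<^sup>2" "0 \<le> e"
  shows "\<bar>b\<bar> \<le> e"
proof -
  have "1 \<le> x powr (1/2 - 1/(\<kappa>+4))" using assms by (simp add: ge_one_powr_ge_zero)
  then have "\<bar>b\<bar> \<le> \<bar>b\<bar> * x powr (1/2 - 1/(\<kappa>+4))" by (simp add: mult_le_cancel_left1)
  also have "\<dots> \<le> e" using fab_le_sq_bounds(2) assms by simp
  finally show ?thesis .
qed

lemma measure_fab_sublevel_le:
  fixes \<kappa> \<gamma> \<nu> \<rho> a b e x1 x2 :: real
  defines "q \<equiv> 1 / (\<kappa>+4)"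
  assumes "0 < \<kappa>" "0 < \<gamma>" "\<gamma> \<le> 1" "0 < e" "\<nu> \<le> \<bar>a\<bar> powr \<kappa> * \<bar>b\<bar>"
    and "3 * 2 powr \<kappa> * e powr (\<kappa>+1) < \<nu>" "e \<le> sqrt \<rho> / 8"
    and "e < doubling_threshold \<kappa> \<gamma> q \<nu> (sqrt \<rho>)"
    and "1 \<le> x1" "x1 < x2" "fab \<kappa> \<gamma> a b x1 = \<rho>"
  shows "measure lebesgue {x \<in> {x1<..<x2}. \<bar>fab \<kappa> \<gamma> a b x\<bar> \<le> e\<^sup>2} \<le> 384 * (e / sqrt \<rho>) * (x2 - x1)"
proof -
  have q: "0 < q" "q \<le> 1/2" "q * (\<kappa>+1) < 1" using assms(2) by (simp_all add: q_def)
  interpret sublevel_estimates \<kappa> \<gamma> q \<nu> a b e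
    using q assms(2-7) by unfold_locales auto
  have R: "0 < sqrt \<rho>" using assms(5,8) by linarith
  have sublevel: "x1 < x \<and> \<bar>G x\<bar> \<le> e * x powr q \<and> \<bar>b\<bar> * x powr (1/2 - q) \<le> e"
    if "x \<in> {x \<in> {x1<..<x2}. \<bar>fab \<kappa> \<gamma> a b x\<bar> \<le> e\<^sup>2}" for x
    using that fab_le_sq_bounds[of x \<kappa> \<gamma> a b e] assms by (auto simp: q_def)
  have "measure lebesgue {x \<in> {x1<..<x2}. \<bar>fab \<kappa> \<gamma> a b x\<bar> \<le> e\<^sup>2} \<le> 2 * (192 * (e / sqrt \<rho>)) * (x2 - x1)"
  proof (rule measure_le_of_spread_le)
    fix y z assume y: "y \<in> {x \<in> {x1<..<x2}. \<bar>fab \<kappa> \<gamma> a b x\<bar> \<le> e\<^sup>2}"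
      and z: "z \<in> {x \<in> {x1<..<x2}. \<bar>fab \<kappa> \<gamma> a b x\<bar> \<le> e\<^sup>2}"
    have "\<bar>b\<bar> * x1 powr (1/2 - q) \<le> \<bar>b\<bar> * y powr (1/2 - q)"
      using sublevel[OF y] assms(10) q(2) by (intro mult_left_mono powr_mono2) auto
    then have "\<bar>b\<bar> * x1 powr (1/2 - q) \<le> sqrt \<rho> / 8" using sublevel[OF y] assms(8) by linarith
    then have "sqrt \<rho> / 2 * x1 powr q \<le> \<bar>G x1\<bar>" "\<bar>G x1\<bar> \<le> sqrt \<rho> * x1 powr q"
      using fab_eq_bounds[of x1 \<kappa> \<gamma> a b \<rho>] assms(10,12) by (simp_all add: q_def)
    moreover have "\<bar>b\<bar> \<le> e"
      using abs_b_le_of_fab_le[of \<kappa> y \<gamma> a b e] y assms(2,10) e_pos by auto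
    ultimately show "\<bar>y - z\<bar> \<le> 192 * (e / sqrt \<rho>) * (y - x1)"
      using sublevel_spread[of x1 y z "sqrt \<rho>"] sublevel[OF y] sublevel[OF z] assms R by auto
  qed (use assms R in auto)
  then show ?thesis by simp
qed

lemma good_fab:
  fixes \<kappa> \<gamma> \<mu> \<nu> \<rho> e0 a b :: real
  assumes "0 < \<kappa>" "0 < \<gamma>" "\<gamma> \<le> 1" "0 < e0" "e0 \<le> \<mu>" "e0 \<le> sqrt \<rho> / 8"
    and "3 * 2 powr \<kappa> * e0 powr (\<kappa>+1) \<le> \<nu>" "e0 \<le> doubling_threshold \<kappa> \<gamma> (1 / (\<kappa>+4)) \<nu> (sqrt \<rho>)"
    and "\<mu> \<le> \<bar>b\<bar> \<or> \<nu> \<le> \<bar>a\<bar> powr \<kappa> * \<bar>b\<bar>"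
  shows "good (fab \<kappa> \<gamma> a b) 384 (1/2) \<rho> (e0\<^sup>2)"
  unfolding good_def
proof (intro allI impI)
  fix \<epsilon> x1 x2 :: real
  assume H: "0 < \<epsilon> \<and> \<epsilon> < e0\<^sup>2 \<and> 1 \<le> x1 \<and> x1 < x2 \<and> \<bar>fab \<kappa> \<gamma> a b x1\<bar> = \<rho>"
  define e where "e = sqrt \<epsilon>"
  have e: "0 < e" "e < e0" "\<epsilon> = e\<^sup>2"
    using H assms(4) real_sqrt_less_mono[of \<epsilon> "e0\<^sup>2"] by (auto simp: e_def)
  have R: "0 < sqrt \<rho>" using assms(4,6) by linarith
  have half_powr: "(e\<^sup>2 / \<rho>) powr (1/2) = e / sqrt \<rho>"
    using e R by (simp add: powr_half_sqrt real_sqrt_divide)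
  have interval: "measure lebesgue {x1<..<x2} = x2 - x1" using H by simp
  have "measure lebesgue {x \<in> {x1<..<x2}. \<bar>fab \<kappa> \<gamma> a b x\<bar> \<le> e\<^sup>2} \<le> 384 * (e / sqrt \<rho>) * (x2 - x1)"
  proof (cases "\<mu> \<le> \<bar>b\<bar>")
    case True
    have "\<not> (1 \<le> x \<and> \<bar>fab \<kappa> \<gamma> a b x\<bar> \<le> e\<^sup>2)" for x
      using abs_b_le_of_fab_le[of \<kappa> x \<gamma> a b e] fab_nonneg[of \<kappa> \<gamma> a b x] True e assms(1,5)
      by auto
    then have "{x \<in> {x1<..<x2}. \<bar>fab \<kappa> \<gamma> a b x\<bar> \<le> e\<^sup>2} = {}" using H by auto
    moreover have "0 \<le> 384 * (e / sqrt \<rho>) * (x2 - x1)" using H e R by simp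
    ultimately show ?thesis by (simp only: measure_empty)
  next
    case False
    have "3 * 2 powr \<kappa> * e powr (\<kappa>+1) < 3 * 2 powr \<kappa> * e0 powr (\<kappa>+1)"
      using e assms(1) by (simp add: powr_less_mono2)
    moreover have "fab \<kappa> \<gamma> a b x1 = \<rho>" using H fab_nonneg[of \<kappa> \<gamma> a b x1] by simp
    ultimately show ?thesis
      using measure_fab_sublevel_le[of \<kappa> \<gamma> e \<nu> a b \<rho> x1 x2] False assms(1-3,6-9) e(1,2) H
      by linarith
  qed
  then show "measure lebesgue {x \<in> {x1<..<x2}. \<bar>fab \<kappa> \<gamma> a b x\<bar> \<le> \<epsilon>}
      \<le> 384 * (\<epsilon> / \<rho>) powr (1/2) * measure lebesgue {x1<..<x2}"
    unfolding e(3) half_powr interval .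
qed

theorem lemma4p1:
  fixes \<kappa> \<mu> \<nu> \<gamma> \<rho> :: real
  assumes "\<kappa> > 0" "\<mu> > 0" "\<nu> > 0" "0 < \<gamma>" "\<gamma> < 1 / (\<kappa> + 4)" "\<rho> > 0"
  shows "\<exists>C \<epsilon>0. C > 0 \<and> \<epsilon>0 > 0 \<and>
    (\<forall>a b :: real. (a, b) \<noteq> (0, 0) \<and> (\<bar>b\<bar> \<ge> \<mu> \<or> \<bar>a\<bar> powr \<kappa> * \<bar>b\<bar> \<ge> \<nu>)
        \<and> \<rho> \<le> fab \<kappa> \<gamma> a b 1
      \<longrightarrow> good (fab \<kappa> \<gamma> a b) C (1/2) \<rho> \<epsilon>0)"
proof -
  define W where "W = \<nu> / (3 * 2 powr \<kappa>)"
  define e0 where "e0 = Min {sqrt \<rho> / 8, \<mu>, W powr (1 / (\<kappa>+1)),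
    doubling_threshold \<kappa> \<gamma> (1 / (\<kappa>+4)) \<nu> (sqrt \<rho>)}"
  have "0 < W" using assms(3) by (simp add: W_def)
  have "0 < e0" using assms \<open>0 < W\<close> doubling_threshold_pos by (simp add: e0_def)
  have "1 / (\<kappa> + 4) \<le> 1" using assms(1) by simp
  then have "\<gamma> \<le> 1" using assms(5) by linarith
  have "e0 powr (\<kappa>+1) \<le> (W powr (1 / (\<kappa>+1))) powr (\<kappa>+1)"
    using \<open>0 < e0\<close> assms(1) by (intro powr_mono2) (auto simp: e0_def)
  also have "\<dots> = W" using \<open>0 < W\<close> assms(1) by (simp add: powr_powr)
  finally have "3 * 2 powr \<kappa> * e0 powr (\<kappa>+1) \<le> \<nu>" by (simp add: W_def field_simps)
  then have "good (fab \<kappa> \<gamma> a b) 384 (1/2) \<rho> (e0\<^sup>2)"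
    if "\<mu> \<le> \<bar>b\<bar> \<or> \<nu> \<le> \<bar>a\<bar> powr \<kappa> * \<bar>b\<bar>" for a b
    using good_fab[of \<kappa> \<gamma> e0 \<mu> \<rho> \<nu> b a] that assms(1,4) \<open>\<gamma> \<le> 1\<close> \<open>0 < e0\<close> by (simp add: e0_def)
  then show ?thesis using \<open>0 < e0\<close> by (intro exI[of _ 384] exI[of _ "e0\<^sup>2"]) auto
qed

end
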